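(* Let $A:\mathbb{R}^n\rightrightarrows\mathbb{R}^n$ be a maximally monotone symmetric linear relation, $a,b\in\mathbb{R}^n$, $c\in\mathbb{R}$, $r>0$, and define the generalized linear-quadratic function $$f(x)=\frac r2\langle x-a,A(x-a)\rangle+\langle b,x\rangle+c$$ (with $f(x)=\infty$ when $x-a\notin\operatorname{dom}A$). Then for every $x\in\mathbb{R}^n$, $$e_rf(x)=r\,q_{(\operatorname{Id}+A^{-1})^{-1}}\Big(x-a-\frac br\Big)+\langle b,x\rangle-\frac1r q(b)+c.$$
   Context: A linear relation is an operator $A:\mathbb{R}^n\rightrightarrows\mathbb{R}^n$ whose graph $\{(x,x^* ):x^*\in Ax\}$ is a linear subspace of $\mathbb{R}^n\times\mathbb{R}^n$. $A$ is monotone if $\langle x^*-y^*,x-y\rangle\ge0$ for all $(x,x^* ),(y,y^* )$ in its graph, maximally monotone if no monotone operator has a strictly larger graph, and symmetric if $\langle x,y^*\rangle=\langle y,x^*\rangle$ for all $(x,x^* ),(y,y^* )\in\operatorname{gra}A$. $A^{-1}$ is the set-valued inverse. For a monotone linear relation $B$, $q_B(x)=\frac12\langle x,Bx\rangle$ if $x\in\operatorname{dom}B$ (single-valued) and $\infty$ otherwise. $q=\frac12\|\cdot\|^2$. The Moreau envelope is $e_rf(x)=\inf_y\{f(y)+\frac r2\|y-x\|^2\}$. *)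

theory Defs
  imports "HOL-Analysis.Analysis"
begin

text \<open>Set-valued operators on R^n are represented by their graphs,
  i.e. sets of pairs (x, x*) with x* in A x.\<close>

type_synonym 'n rel_op = "((real^'n) \<times> (real^'n)) set"

definition linear_relation :: "('n::finite) rel_op \<Rightarrow> bool" where
  "linear_relation A \<longleftrightarrow> subspace A"

definition monotone_op :: "('n::finite) rel_op \<Rightarrow> bool" where
  "monotone_op A \<longleftrightarrow> (\<forall>(x, x') \<in> A. \<forall>(y, y') \<in> A. inner (x' - y') (x - y) \<ge> 0)"

definition maximally_monotone :: "('n::finite) rel_op \<Rightarrow> bool" where
  "maximally_monotone A \<longleftrightarrow> monotone_op A \<and>
     (\<forall>B. monotone_op B \<and> A \<subseteq> B \<longrightarrow> B = A)"

definition symmetric_op :: "('n::finite) rel_op \<Rightarrow> bool" where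
  "symmetric_op A \<longleftrightarrow> (\<forall>(x, x') \<in> A. \<forall>(y, y') \<in> A. inner x y' = inner y x')"

definition op_inv :: "('n::finite) rel_op \<Rightarrow> 'n rel_op" where
  "op_inv A = {(x', x) | x x'. (x, x') \<in> A}"

definition id_plus :: "('n::finite) rel_op \<Rightarrow> 'n rel_op" where
  "id_plus B = {(x, x + y) | x y. (x, y) \<in> B}"

text \<open>A chosen element of A x (for x in dom A); for a monotone linear
  relation the value of inner x (A x) does not depend on the choice.\<close>
definition op_pick :: "('n::finite) rel_op \<Rightarrow> real^'n \<Rightarrow> real^'n" where
  "op_pick A x = (SOME y. (x, y) \<in> A)"

definition q_op :: "('n::finite) rel_op \<Rightarrow> real^'n \<Rightarrow> ereal" where
  "q_op B x = (if x \<in> Domain B then ereal (1/2 * inner x (op_pick B x)) else \<infinity>)"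

definition qn :: "(real^('n::finite)) \<Rightarrow> real" where
  "qn x = 1/2 * (norm x)^2"

definition moreau_env :: "real \<Rightarrow> (real^('n::finite) \<Rightarrow> ereal) \<Rightarrow> real^'n \<Rightarrow> ereal" where
  "moreau_env r f x = (INF y. f y + ereal (r/2 * (norm (y - x))^2))"

definition glq :: "('n::finite) rel_op \<Rightarrow> real \<Rightarrow> real^'n \<Rightarrow> real^'n \<Rightarrow> real \<Rightarrow> real^'n \<Rightarrow> ereal" where
  "glq A r a b c x = (if x - a \<in> Domain A
     then ereal (r/2 * inner (x - a) (op_pick A (x - a)) + inner b x + c) else \<infinity>)"

end

theory Submission
  imports Defs
begin

text \<open>Write \<open>w = x - a - b/r\<close>. By Minty's theorem \<open>w = p + p'\<close> for some \<open>(p, p') \<in> A\<close>,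
  and then \<open>(Id + A\<^sup>-\<^sup>1)\<^sup>-\<^sup>1 w = {p'}\<close>, so the right-hand side equals
  \<open>V = r/2 \<langle>w, p'\<rangle> + \<langle>b, x\<rangle> - q(b)/r + c\<close>. For \<open>y = a + p + d\<close> with
  \<open>(p + d, p' + d') \<in> A\<close> a direct expansion, using symmetry to cancel the mixed terms, gives
  \<open>f(y) + r/2 \<parallel>y - x\<parallel>\<^sup>2 = V + r/2 (\<langle>d, d'\<rangle> + \<parallel>d\<parallel>\<^sup>2)\<close>. Monotonicity makes the
  last term nonnegative, and it vanishes at \<open>d = 0\<close>, so the infimum is \<open>V\<close>.\<close>

lemma monotone_opD:
  assumes "monotone_op A" "(x, x') \<in> A" "(y, y') \<in> A"
  shows "(x' - y') \<bullet> (x - y) \<ge> 0"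
  using assms unfolding monotone_op_def by fast

lemma monotone_opI:
  assumes "\<And>x x' y y'. (x, x') \<in> A \<Longrightarrow> (y, y') \<in> A \<Longrightarrow> (x' - y') \<bullet> (x - y) \<ge> 0"
  shows "monotone_op A"
  using assms unfolding monotone_op_def by auto

lemma symmetric_opD:
  assumes "symmetric_op A" "(x, x') \<in> A" "(y, y') \<in> A"
  shows "x \<bullet> y' = y \<bullet> x'"
  using assms unfolding symmetric_op_def by fast

lemma linear_relation_zero:
  assumes "linear_relation A"
  shows "(0, 0) \<in> A"
  using subspace_0[of A] assms by (simp add: linear_relation_def zero_prod_def)

lemma op_pick_mem:
  assumes "(x, y) \<in> A"
  shows "(x, op_pick A x) \<in> A"
  using assms unfolding op_pick_def by (rule someI)

lemma symmetric_op_inner_pick: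
  assumes "symmetric_op A" "(x, y) \<in> A"
  shows "x \<bullet> op_pick A x = x \<bullet> y"
  using symmetric_opD[OF assms(1) assms(2) op_pick_mem[OF assms(2)]] by simp

lemma monotone_op_insert_diag:
  assumes mono: "monotone_op A" and zero: "(0, 0) \<in> A"
    and orth: "\<And>x x'. (x, x') \<in> A \<Longrightarrow> v \<bullet> (x + x') = 0"
  shows "monotone_op (insert (v, v) A)"
proof -
  have new_pair: "(x' - v) \<bullet> (x - v) \<ge> 0 \<and> (v - x') \<bullet> (v - x) \<ge> 0"
    if "(x, x') \<in> A" for x x'
  proof -
    have "(x' - v) \<bullet> (x - v) = v \<bullet> v - v \<bullet> (x + x') + x' \<bullet> x"
      by (simp add: inner_simps inner_commute)
    moreover have "x' \<bullet> x \<ge> 0"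
      using monotone_opD[OF mono that zero] by simp
    moreover have "(v - x') \<bullet> (v - x) = (x' - v) \<bullet> (x - v)"
      by (metis inner_minus_left inner_minus_right minus_diff_eq)
    ultimately show ?thesis
      using orth[OF that] by simp
  qed
  show ?thesis
  proof (rule monotone_opI)
    fix x x' y y'
    assume "(x, x') \<in> insert (v, v) A" "(y, y') \<in> insert (v, v) A"
    then show "(x' - y') \<bullet> (x - y) \<ge> 0"
      using monotone_opD[OF mono] new_pair by auto
  qed
qed

text \<open>Minty's theorem for linear relations: if \<open>Id + A\<close> missed a point, its range would be a
  proper subspace, and a nonzero normal \<open>v\<close> to it would give the monotone extension
  \<open>(v, v)\<close> of \<open>A\<close>.\<close>

lemma maximally_monotone_linear_range_id_plus:
  assumes lin: "linear_relation A" and maxmono: "maximally_monotone A"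
  shows "Range (id_plus A) = UNIV"
proof (rule ccontr)
  let ?R = "(\<lambda>z. fst z + snd z) ` A"
  have "Range (id_plus A) = ?R"
    unfolding id_plus_def by force
  moreover assume "Range (id_plus A) \<noteq> UNIV"
  moreover have "subspace ?R"
    using lin unfolding linear_relation_def
    by (intro linear_subspace_image) (auto simp: linear_iff algebra_simps)
  ultimately have "span ?R \<noteq> UNIV"
    using span_eq_iff by metis
  then obtain v where "v \<noteq> 0" and v_normal: "span ?R \<subseteq> {y. v \<bullet> y = 0}"
    using span_not_univ_subset_hyperplane by blast
  have orth: "v \<bullet> (x + x') = 0" if "(x, x') \<in> A" for x x'
    using v_normal span_base[of "x + x'" ?R] that by force
  have mono: "monotone_op A"
    using maxmono maximally_monotone_def by blast
  have "monotone_op (insert (v, v) A)"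
    using monotone_op_insert_diag[OF mono linear_relation_zero[OF lin] orth] .
  then have "(v, v) \<in> A"
    using maxmono unfolding maximally_monotone_def by blast
  then have "v \<bullet> v + v \<bullet> v = 0"
    using orth[of v v] by (simp only: inner_add_right)
  with \<open>v \<noteq> 0\<close> show False
    by simp
qed

lemma mem_op_inv_id_plus_op_inv:
  "(w, q) \<in> op_inv (id_plus (op_inv A)) \<longleftrightarrow> (\<exists>p. (p, q) \<in> A \<and> p + q = w)"
  unfolding op_inv_def id_plus_def by (auto simp: add.commute)

lemma monotone_op_sum_unique:
  assumes "monotone_op A" "(p, p') \<in> A" "(q, q') \<in> A" "p + p' = q + q'"
  shows "p' = q'"
proof -
  have "p - q = - (p' - q')"
    using assms(4) by (simp add: algebra_simps)
  then have "0 \<le> - ((p' - q') \<bullet> (p' - q'))"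
    using monotone_opD[OF assms(1-3)] by (metis inner_minus_right)
  then have "(p' - q') \<bullet> (p' - q') = 0"
    using inner_ge_zero[of "p' - q'"] by linarith
  then show ?thesis
    by simp
qed

lemma q_op_inv_id_plus_op_inv:
  assumes "monotone_op A" "(p, p') \<in> A"
  shows "q_op (op_inv (id_plus (op_inv A))) (p + p') = ereal (1/2 * ((p + p') \<bullet> p'))"
proof -
  let ?B = "op_inv (id_plus (op_inv A))"
  have "(p + p', p') \<in> ?B"
    using assms(2) mem_op_inv_id_plus_op_inv by blast
  then have "(p + p', op_pick ?B (p + p')) \<in> ?B"
    by (rule op_pick_mem)
  then have "op_pick ?B (p + p') = p'"
    using monotone_op_sum_unique[OF assms(1)] assms(2)
    unfolding mem_op_inv_id_plus_op_inv by metis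
  with \<open>(p + p', p') \<in> ?B\<close> show ?thesis
    unfolding q_op_def by auto
qed

lemma glq_on_graph:
  assumes "symmetric_op A" "(u, u') \<in> A"
  shows "glq A r a b c (a + u) = ereal (r/2 * (u \<bullet> u') + b \<bullet> (a + u) + c)"
  using assms by (auto simp: glq_def symmetric_op_inner_pick)

lemma moreau_objective_expansion:
  fixes p p' d d' a b :: "'a::real_inner" and r c :: real
  assumes "r \<noteq> 0"
  shows "r/2 * ((p + d) \<bullet> (p' + d')) + b \<bullet> (a + (p + d)) + c
      + r/2 * (norm (a + (p + d) - (a + p + p' + (1/r) *\<^sub>R b)))\<^sup>2
    = r/2 * ((p + p') \<bullet> p') + b \<bullet> (a + p + p' + (1/r) *\<^sub>R b) - (1/r) * (1/2 * (norm b)\<^sup>2) + c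
      + r/2 * (d \<bullet> d' + d \<bullet> d) + r/2 * (p \<bullet> d' - d \<bullet> p')"
  using assms by (simp add: power2_norm_eq_inner inner_simps inner_commute field_simps)

lemma moreau_env_eqI:
  assumes "f y\<^sub>0 + ereal (r/2 * (norm (y\<^sub>0 - x))\<^sup>2) = m"
    and "\<And>y. m \<le> f y + ereal (r/2 * (norm (y - x))\<^sup>2)"
  shows "moreau_env r f x = m"
  unfolding moreau_env_def
proof (rule antisym)
  show "(INF y. f y + ereal (r/2 * (norm (y - x))\<^sup>2)) \<le> m"
    using INF_lower[OF UNIV_I, of "\<lambda>y. f y + ereal (r/2 * (norm (y - x))\<^sup>2)" y\<^sub>0] assms(1)
    by simp
  show "m \<le> (INF y. f y + ereal (r/2 * (norm (y - x))\<^sup>2))"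
    using assms(2) by (rule INF_greatest)
qed

lemma moreau_env_glq:
  assumes mono: "monotone_op A" and sym: "symmetric_op A" and "r > 0"
    and pA: "(p, p') \<in> A" and x: "x = a + p + p' + (1/r) *\<^sub>R b"
  shows "moreau_env r (glq A r a b c) x
    = ereal (r/2 * ((p + p') \<bullet> p') + b \<bullet> x - (1/r) * qn b + c)"
proof (rule moreau_env_eqI)
  let ?V = "r/2 * ((p + p') \<bullet> p') + b \<bullet> x - (1/r) * qn b + c"
  have objective: "glq A r a b c (a + (p + d)) + ereal (r/2 * (norm (a + (p + d) - x))\<^sup>2)
      = ereal (?V + r/2 * (d \<bullet> d' + d \<bullet> d))"
    if "(p + d, p' + d') \<in> A" for d d'
  proof -
    have "p \<bullet> d' = d \<bullet> p'"
      using symmetric_opD[OF sym pA that] by (simp add: inner_simps inner_commute)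
    then show ?thesis
      using glq_on_graph[OF sym that] moreau_objective_expansion[of r p d p' d' b a c] \<open>r > 0\<close>
      by (simp add: x qn_def)
  qed
  show "glq A r a b c (a + p) + ereal (r/2 * (norm (a + p - x))\<^sup>2) = ereal ?V"
    using objective[of 0 0] pA by simp
  show "ereal ?V \<le> glq A r a b c y + ereal (r/2 * (norm (y - x))\<^sup>2)" for y
  proof (cases "y - a \<in> Domain A")
    case False
    then show ?thesis
      by (simp add: glq_def)
  next
    case True
    then obtain u' where uA: "(y - a, u') \<in> A"
      by blast
    define d where "d = y - a - p"
    define d' where "d' = u' - p'"
    have dA: "(p + d, p' + d') \<in> A"
      using uA by (simp add: d_def d'_def)
    have "0 \<le> d' \<bullet> d"
      using monotone_opD[OF mono uA pA] by (simp add: d_def d'_def)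
    then have "0 \<le> d \<bullet> d' + d \<bullet> d"
      using inner_ge_zero[of d] by (simp add: inner_commute)
    with \<open>r > 0\<close> have "?V \<le> ?V + r/2 * (d \<bullet> d' + d \<bullet> d)"
      by simp
    moreover have "y = a + (p + d)"
      by (simp add: d_def)
    ultimately show ?thesis
      using objective[OF dA] by simp
  qed
qed

theorem theorem4p46:
  fixes A :: "('n::finite) rel_op" and a b x :: "real^'n" and c r :: real
  assumes "linear_relation A" and "maximally_monotone A" and "symmetric_op A"
    and "r > 0"
  shows "moreau_env r (glq A r a b c) x =
    ereal r * q_op (op_inv (id_plus (op_inv A))) (x - a - (1/r) *\<^sub>R b)
      + ereal (inner b x - (1/r) * qn b + c)"
proof -
  have mono: "monotone_op A"
    using assms(2) maximally_monotone_def by blast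
  obtain p p' where pA: "(p, p') \<in> A" and w: "x - a - (1/r) *\<^sub>R b = p + p'"
    using maximally_monotone_linear_range_id_plus[OF assms(1,2)]
    unfolding id_plus_def by blast
  have "moreau_env r (glq A r a b c) x
      = ereal (r/2 * ((p + p') \<bullet> p') + b \<bullet> x - (1/r) * qn b + c)"
    using moreau_env_glq[OF mono assms(3,4) pA] w by (simp add: algebra_simps)
  also have "\<dots> = ereal r * q_op (op_inv (id_plus (op_inv A))) (p + p')
      + ereal (b \<bullet> x - (1/r) * qn b + c)"
    by (simp add: q_op_inv_id_plus_op_inv[OF mono pA])
  finally show ?thesis
    by (simp add: w)
qed

end
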